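(* Let $K$ be an arbitrary field and let $\tau=(q_{11},q_{12},q_{21},q_{22})$ and $\sigma=(p_{11},p_{12},p_{21},p_{22})$ be diagonal braidings on $K\langle x_1,x_2\rangle$. Then the braided algebras $A_\tau$ and $A_\sigma$ are isomorphic if and only if $\sigma=\tau$ or $\sigma=\tau^*$, where $\tau^*=(q_{22},q_{21},q_{12},q_{11})$.
   Context: $A=K\langle x_1,x_2\rangle$ is the free associative algebra with unit on $x_1,x_2$, with basis the set $X^*$ of words. For $q_{ij}\in K$, the diagonal braiding $\tau=(q_{11},q_{12},q_{21},q_{22})$ on $A$ is the linear map $A\otimes A\to A\otimes A$ given on words $u,v$ by $(u\otimes v)\tau=q_{11}^{s_1t_1}q_{12}^{s_1t_2}q_{21}^{s_2t_1}q_{22}^{s_2t_2}\,(v\otimes u)$, where $s_i$ (resp. $t_i$) is the number of occurrences of $x_i$ in $u$ (resp. $v$) (convention $0^0=1$); this is the unique extension to $A$, making $A$ a braided algebra, of the braiding $x_i\otimes x_j\mapsto q_{ij}x_j\otimes x_i$ of $V=Kx_1+Kx_2$. $A_\tau$ denotes $A$ equipped with $\tau$. An isomorphism of braided algebras $A_\tau\to A_\sigma$ is an algebra isomorphism $\varphi:A\to A$ such that $\tau(\varphi\otimes\varphi)=(\varphi\otimes\varphi)\sigma$, i.e. $(\varphi\otimes\varphi)((u\otimes v)\tau)=((\varphi\otimes\varphi)(u\otimes v))\sigma$ for all $u,v\in A$. *)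

theory Defs
  imports "HOL-Library.Poly_Mapping"
begin

datatype gen = X1 | X2

datatype word = Word "gen list"

fun letters :: "word \<Rightarrow> gen list" where "letters (Word w) = w"

instantiation word :: monoid_add
begin
definition zero_word :: word where "zero_word = Word []"
definition plus_word :: "word \<Rightarrow> word \<Rightarrow> word" where
  "plus_word u v = Word (letters u @ letters v)"
instance
proof
  fix a b c :: word
  show "a + b + c = a + (b + c)" by (cases a; cases b; cases c) (simp add: plus_word_def)
  show "0 + a = a" by (cases a) (simp add: plus_word_def zero_word_def)
  show "a + 0 = a" by (cases a) (simp add: plus_word_def zero_word_def)
qed
end

text \<open>The free associative unital algebra K<x1,x2>: finitely supported K-valued functions on words,
  with convolution product (basis = words, product = concatenation).\<close>
type_synonym 'k falg = "word \<Rightarrow>\<^sub>0 'k"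

text \<open>A \<otimes> A, with basis the pairs of words.\<close>
type_synonym 'k ftens = "(word \<times> word) \<Rightarrow>\<^sub>0 'k"

definition smult :: "'k::semiring_0 \<Rightarrow> ('a \<Rightarrow>\<^sub>0 'k) \<Rightarrow> ('a \<Rightarrow>\<^sub>0 'k)" where
  "smult c a = Poly_Mapping.map (\<lambda>x. c * x) a"

definition tens :: "'k::field falg \<Rightarrow> 'k falg \<Rightarrow> 'k ftens" where
  "tens a b = (\<Sum>u\<in>Poly_Mapping.keys a. \<Sum>v\<in>Poly_Mapping.keys b.
      Poly_Mapping.single (u, v) (Poly_Mapping.lookup a u * Poly_Mapping.lookup b v))"

definition occ :: "gen \<Rightarrow> word \<Rightarrow> nat" where
  "occ i u = length (filter (\<lambda>g. g = i) (letters u))"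

text \<open>A diagonal braiding is given by its matrix q (q i j = q_ij).
  Coefficient of (u \<otimes> v)\<tau> = coef * (v \<otimes> u); note x^0 = 1 in Isabelle, so 0^0 = 1.\<close>
definition bcoef :: "(gen \<Rightarrow> gen \<Rightarrow> 'k::field) \<Rightarrow> word \<Rightarrow> word \<Rightarrow> 'k" where
  "bcoef q u v = q X1 X1 ^ (occ X1 u * occ X1 v) * q X1 X2 ^ (occ X1 u * occ X2 v)
               * q X2 X1 ^ (occ X2 u * occ X1 v) * q X2 X2 ^ (occ X2 u * occ X2 v)"

definition braid :: "(gen \<Rightarrow> gen \<Rightarrow> 'k::field) \<Rightarrow> 'k ftens \<Rightarrow> 'k ftens" where
  "braid q t = (\<Sum>uv\<in>Poly_Mapping.keys t.
      Poly_Mapping.single (snd uv, fst uv) (Poly_Mapping.lookup t uv * bcoef q (fst uv) (snd uv)))"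

definition tensmap :: "('k::field falg \<Rightarrow> 'k falg) \<Rightarrow> 'k ftens \<Rightarrow> 'k ftens" where
  "tensmap \<phi> t = (\<Sum>uv\<in>Poly_Mapping.keys t.
      smult (Poly_Mapping.lookup t uv) (tens (\<phi> (Poly_Mapping.single (fst uv) 1)) (\<phi> (Poly_Mapping.single (snd uv) 1))))"

definition alg_iso :: "('k::field falg \<Rightarrow> 'k falg) \<Rightarrow> bool" where
  "alg_iso \<phi> \<longleftrightarrow> bij \<phi>
     \<and> (\<forall>a b. \<phi> (a + b) = \<phi> a + \<phi> b)
     \<and> (\<forall>c a. \<phi> (smult c a) = smult c (\<phi> a))
     \<and> (\<forall>a b. \<phi> (a * b) = \<phi> a * \<phi> b)
     \<and> \<phi> 1 = 1"

text \<open>Isomorphism of braided algebras A_tau \<rightarrow> A_sigma: tau(phi\<otimes>phi) = (phi\<otimes>phi)sigma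
  (maps acting on the right).\<close>
definition braided_iso :: "(gen \<Rightarrow> gen \<Rightarrow> 'k::field) \<Rightarrow> (gen \<Rightarrow> gen \<Rightarrow> 'k) \<Rightarrow> ('k falg \<Rightarrow> 'k falg) \<Rightarrow> bool" where
  "braided_iso q p \<phi> \<longleftrightarrow> alg_iso \<phi>
     \<and> (\<forall>a b. tensmap \<phi> (braid q (tens a b)) = braid p (tensmap \<phi> (tens a b)))"

definition braided_isomorphic :: "(gen \<Rightarrow> gen \<Rightarrow> 'k::field) \<Rightarrow> (gen \<Rightarrow> gen \<Rightarrow> 'k) \<Rightarrow> bool" where
  "braided_isomorphic q p \<longleftrightarrow> (\<exists>\<phi>. braided_iso q p \<phi>)"

fun swap_gen :: "gen \<Rightarrow> gen" where "swap_gen X1 = X2" | "swap_gen X2 = X1"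

definition dual_braiding :: "(gen \<Rightarrow> gen \<Rightarrow> 'k) \<Rightarrow> (gen \<Rightarrow> gen \<Rightarrow> 'k)" where
  "dual_braiding q = (\<lambda>i j. q (swap_gen i) (swap_gen j))"

end

theory Submission
  imports Defs
begin

text \<open>Relabelling words along the identity or along the letter swap \<open>x\<^sub>1 \<leftrightarrow> x\<^sub>2\<close> gives
  braided isomorphisms \<open>A\<^sub>\<tau> \<rightarrow> A\<^sub>\<tau>\<close> and \<open>A\<^sub>\<tau> \<rightarrow> A\<^sub>\<tau>\<^sub>*\<close>. Conversely, let \<open>\<phi>\<close> be a braided
  isomorphism \<open>A\<^sub>\<tau> \<rightarrow> A\<^sub>\<sigma>\<close>. Comparing coefficients of \<open>x\<^sub>l \<otimes> x\<^sub>k\<close> in the braiding condition for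
  \<open>x\<^sub>i \<otimes> x\<^sub>j\<close> gives \<open>p\<^sub>k\<^sub>l = q\<^sub>i\<^sub>j\<close> whenever \<open>x\<^sub>k\<close> occurs in \<open>\<phi>(x\<^sub>i)\<close> and \<open>x\<^sub>l\<close> in \<open>\<phi>(x\<^sub>j)\<close>.
  The linear part of a product lies in the span of the linear parts of its factors, so surjectivity
  of \<open>\<phi>\<close> forces the \<open>2 \<times> 2\<close> matrix of linear parts of \<open>\<phi>(x\<^sub>1), \<phi>(x\<^sub>2)\<close> to be invertible. Hence
  its diagonal or its antidiagonal is free of zeros, giving \<open>\<sigma> = \<tau>\<close> or \<open>\<sigma> = \<tau>\<^sup>*\<close>.\<close>

lemma lookup_smult [simp]: "Poly_Mapping.lookup (smult c a) k = c * Poly_Mapping.lookup a k"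
  by (simp add: smult_def map.rep_eq when_def)

lemma smult_single_one: "smult c (Poly_Mapping.single w (1::'k::field)) = Poly_Mapping.single w c"
  by (rule poly_mapping_eqI) (simp add: lookup_single when_def)

lemma sum_keys_when_eq:
  "(\<Sum>x\<in>Poly_Mapping.keys f. g x when x = a) = (g a when Poly_Mapping.lookup f a \<noteq> 0)"
  by (simp add: when_def in_keys_iff)

lemma lookup_tens [simp]:
  "Poly_Mapping.lookup (tens a b) (u, v) = Poly_Mapping.lookup a u * Poly_Mapping.lookup b v"
proof -
  have "Poly_Mapping.lookup (tens a b) (u, v) = (\<Sum>u'\<in>Poly_Mapping.keys a. (\<Sum>v'\<in>Poly_Mapping.keys b.
      Poly_Mapping.lookup a u' * Poly_Mapping.lookup b v' when v' = v) when u' = u)"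
    unfolding tens_def lookup_sum lookup_single by (intro sum.cong) (auto simp: when_def)
  then show ?thesis by (simp only: sum_keys_when_eq) (simp add: when_def)
qed

lemma lookup_braid [simp]:
  "Poly_Mapping.lookup (braid q t) (u, v) = Poly_Mapping.lookup t (v, u) * bcoef q v u"
proof -
  have "Poly_Mapping.lookup (braid q t) (u, v) = (\<Sum>x\<in>Poly_Mapping.keys t.
      Poly_Mapping.lookup t x * bcoef q (fst x) (snd x) when x = (v, u))"
    unfolding braid_def lookup_sum lookup_single by (intro sum.cong) (auto simp: when_def)
  then show ?thesis by (simp only: sum_keys_when_eq) (simp add: when_def)
qed

lemma lookup_tensmap:
  "Poly_Mapping.lookup (tensmap \<phi> t) (u, v) =
    (\<Sum>(u', v')\<in>Poly_Mapping.keys t. Poly_Mapping.lookup t (u', v')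
       * Poly_Mapping.lookup (\<phi> (Poly_Mapping.single u' 1)) u
       * Poly_Mapping.lookup (\<phi> (Poly_Mapping.single v' 1)) v)"
  unfolding tensmap_def lookup_sum by (simp add: case_prod_beta mult.assoc)

lemma tens_single_single:
  "tens (Poly_Mapping.single u 1) (Poly_Mapping.single v 1) = Poly_Mapping.single (u, v) (1::'k::field)"
  by (rule poly_mapping_eqI) (auto simp: lookup_single when_def split: if_splits)

lemma braid_single:
  "braid q (Poly_Mapping.single (u, v) c) = Poly_Mapping.single (v, u) (c * bcoef q u v)"
  by (rule poly_mapping_eqI) (auto simp: lookup_single when_def split: if_splits)

lemma lookup_tensmap_single:
  "Poly_Mapping.lookup (tensmap \<phi> (Poly_Mapping.single (u, v) c)) (u', v') =
    c * Poly_Mapping.lookup (\<phi> (Poly_Mapping.single u 1)) u' * Poly_Mapping.lookup (\<phi> (Poly_Mapping.single v 1)) v'"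
  by (cases "c = 0") (simp_all add: lookup_tensmap)

lemma bcoef_letters [simp]: "bcoef q (Word [i]) (Word [j]) = q i j"
  by (cases i; cases j) (simp_all add: bcoef_def occ_def)

lemma plus_word_eq_letter:
  "u + v = Word [x] \<longleftrightarrow> (u = 0 \<and> v = Word [x]) \<or> (u = Word [x] \<and> v = 0)"
  by (cases u; cases v) (auto simp: plus_word_def zero_word_def append_eq_Cons_conv)

lemma lookup_mult_letter:
  fixes h k :: "'k::field falg"
  shows "Poly_Mapping.lookup (h * k) (Word [x]) =
    Poly_Mapping.lookup h 0 * Poly_Mapping.lookup k (Word [x]) + Poly_Mapping.lookup h (Word [x]) * Poly_Mapping.lookup k 0"
proof -
  have inner: "(\<Sum>v. Poly_Mapping.lookup k v when Word [x] = u + v) =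
      (Poly_Mapping.lookup k (Word [x]) when u = 0) + (Poly_Mapping.lookup k 0 when u = Word [x])" for u
    by (cases "u = 0"; cases "u = Word [x]") (auto simp: eq_commute[of "Word [x]"] plus_word_eq_letter zero_word_def)
  have "Poly_Mapping.lookup (h * k) (Word [x]) =
      (\<Sum>u. (Poly_Mapping.lookup h u * Poly_Mapping.lookup k (Word [x]) when u = 0)
        + (Poly_Mapping.lookup h u * Poly_Mapping.lookup k 0 when u = Word [x]))"
    unfolding lookup_mult inner by (simp add: distrib_left mult_when)
  also have "\<dots> = Poly_Mapping.lookup h 0 * Poly_Mapping.lookup k (Word [x]) + Poly_Mapping.lookup h (Word [x]) * Poly_Mapping.lookup k 0"
    by (subst Sum_any.distrib) (auto intro: finite_subset[of _ "{0}"] finite_subset[of _ "{Word [x]}"])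
  finally show ?thesis .
qed

lemma bij_map_key:
  fixes s :: "'a \<Rightarrow> 'c"
  assumes "bij s"
  shows "bij (Poly_Mapping.map_key s :: ('c \<Rightarrow>\<^sub>0 'b::zero) \<Rightarrow> _)"
proof -
  have "inj s" "inj (inv s)" using assms by (simp_all add: bij_is_inj bij_imp_bij_inv)
  have "inv s \<circ> s = id" "s \<circ> inv s = id"
    using assms by (simp_all add: bij_def surj_iff)
  note map_key_id = map_key_id[folded id_def]
  have "Poly_Mapping.map_key s (Poly_Mapping.map_key (inv s) p) = p" for p :: "'a \<Rightarrow>\<^sub>0 'b"
    by (simp only: map_key_compose \<open>inj s\<close> \<open>inj (inv s)\<close> \<open>inv s \<circ> s = id\<close> map_key_id)
  moreover have "Poly_Mapping.map_key (inv s) (Poly_Mapping.map_key s p) = p" for p :: "'c \<Rightarrow>\<^sub>0 'b"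
    by (simp only: map_key_compose \<open>inj s\<close> \<open>inj (inv s)\<close> \<open>s \<circ> inv s = id\<close> map_key_id)
  ultimately show ?thesis
    by (intro o_bij[where g = "Poly_Mapping.map_key (inv s)"]) (simp_all add: fun_eq_iff)
qed

lemma alg_iso_map_key:
  fixes s :: "word \<Rightarrow> word"
  assumes "bij s" and s_add: "\<And>u v. s (u + v) = s u + s v" and s_zero: "s 0 = 0"
  shows "alg_iso (Poly_Mapping.map_key s :: 'k::field falg \<Rightarrow> 'k falg)"
proof -
  have "inj s" using \<open>bij s\<close> by (rule bij_is_inj)
  note lookup_map_key = map_key.rep_eq[OF \<open>inj s\<close>, unfolded comp_def]
  let ?f = "Poly_Mapping.map_key s :: 'k falg \<Rightarrow> 'k falg"
  have "bij ?f" using \<open>bij s\<close> by (rule bij_map_key)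
  have split_iff: "s w = s u + s v \<longleftrightarrow> w = u + v" for u v w
    using \<open>inj s\<close> by (simp add: s_add[symmetric] inj_eq)
  have "?f (a * b) = ?f a * ?f b" for a b
  proof (rule poly_mapping_eqI)
    fix w
    have inner: "(\<Sum>v. Poly_Mapping.lookup b v when s w = s u + v) =
        (\<Sum>v. Poly_Mapping.lookup b (s v) when w = u + v)" for u
      by (rule Sum_any.reindex_cong[OF \<open>bij s\<close>]) (simp_all add: fun_eq_iff split_iff)
    show "Poly_Mapping.lookup (?f (a * b)) w = Poly_Mapping.lookup (?f a * ?f b) w"
      unfolding lookup_map_key lookup_mult
      by (rule Sum_any.reindex_cong[OF \<open>bij s\<close>]) (simp_all add: fun_eq_iff inner)
  qed
  moreover have "?f 1 = 1"
  proof (rule poly_mapping_eqI)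
    fix w
    have "s w = 0 \<longleftrightarrow> w = 0" using inj_eq[OF \<open>inj s\<close>, of w 0] by (simp add: s_zero)
    then show "Poly_Mapping.lookup (?f 1) w = Poly_Mapping.lookup 1 w"
      by (simp add: lookup_map_key lookup_one)
  qed
  ultimately show ?thesis
    using \<open>bij ?f\<close> by (auto simp: alg_iso_def map_key_plus[OF \<open>inj s\<close>] intro!: poly_mapping_eqI simp: lookup_map_key)
qed

lemma lookup_tensmap_map_key:
  assumes "inj s"
  shows "Poly_Mapping.lookup (tensmap (Poly_Mapping.map_key s) t) (u, v) = Poly_Mapping.lookup t (s u, s v)"
proof -
  have "Poly_Mapping.lookup (tensmap (Poly_Mapping.map_key s) t) (u, v) =
      (\<Sum>x\<in>Poly_Mapping.keys t. Poly_Mapping.lookup t x when x = (s u, s v))"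
    unfolding lookup_tensmap using assms
    by (intro sum.cong) (auto simp: map_key.rep_eq lookup_single when_def split: if_splits)
  then show ?thesis by (simp only: sum_keys_when_eq) (simp add: when_def)
qed

lemma braided_isomorphic_map_key:
  fixes q p :: "gen \<Rightarrow> gen \<Rightarrow> 'k::field"
  assumes "bij s" "\<And>u v. s (u + v) = s u + s v" "s 0 = 0"
    and bcoef_s: "\<And>u v. bcoef p u v = bcoef q (s u) (s v)"
  shows "braided_isomorphic q p"
  unfolding braided_isomorphic_def braided_iso_def
proof (intro exI conjI allI)
  show "alg_iso (Poly_Mapping.map_key s :: 'k falg \<Rightarrow> _)" using assms(1-3) by (rule alg_iso_map_key)
  have "inj s" using \<open>bij s\<close> by (rule bij_is_inj)
  show "tensmap (Poly_Mapping.map_key s) (braid q (tens a b)) = braid p (tensmap (Poly_Mapping.map_key s) (tens a b))"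
    for a b :: "'k falg"
    by (rule poly_mapping_eqI) (auto simp: lookup_tensmap_map_key[OF \<open>inj s\<close>] bcoef_s)
qed

fun swap_word :: "word \<Rightarrow> word" where
  "swap_word (Word w) = Word (map swap_gen w)"

lemma swap_gen_swap_gen [simp]: "swap_gen (swap_gen i) = i"
  by (cases i) simp_all

lemma swap_word_swap_word [simp]: "swap_word (swap_word u) = u"
  by (cases u) (simp add: comp_def)

lemma occ_swap_word: "occ i (swap_word u) = occ (swap_gen i) u"
proof (cases u)
  case (Word w)
  have "filter (\<lambda>g. g = i) (map swap_gen w) = map swap_gen (filter (\<lambda>g. g = swap_gen i) w)"
    by (induction w) auto
  then show ?thesis by (simp add: Word occ_def)
qed

lemma braided_isomorphic_dual: "braided_isomorphic q (dual_braiding q)"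
proof (rule braided_isomorphic_map_key)
  show "bij swap_word" by (rule o_bij[of swap_word]) (simp_all add: fun_eq_iff)
  show "swap_word (u + v) = swap_word u + swap_word v" for u v
    by (cases u; cases v) (simp add: plus_word_def)
  show "swap_word 0 = 0" by (simp add: zero_word_def)
  show "bcoef (dual_braiding q) u v = bcoef q (swap_word u) (swap_word v)" for u v
    by (simp add: bcoef_def dual_braiding_def occ_swap_word mult_ac)
qed

lemma braided_isomorphic_refl: "braided_isomorphic q q"
  by (rule braided_isomorphic_map_key[of id]) simp_all

definition alg_hom :: "('k::field falg \<Rightarrow> 'k falg) \<Rightarrow> bool" where
  "alg_hom \<phi> \<longleftrightarrow> (\<forall>a b. \<phi> (a + b) = \<phi> a + \<phi> b) \<and> (\<forall>c a. \<phi> (smult c a) = smult c (\<phi> a))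
     \<and> (\<forall>a b. \<phi> (a * b) = \<phi> a * \<phi> b) \<and> \<phi> 1 = 1"

lemma alg_iso_iff_bij_alg_hom: "alg_iso \<phi> \<longleftrightarrow> bij \<phi> \<and> alg_hom \<phi>"
  unfolding alg_iso_def alg_hom_def by blast

lemma alg_hom_sum:
  assumes "alg_hom \<phi>"
  shows "\<phi> (\<Sum>x\<in>A. f x) = (\<Sum>x\<in>A. \<phi> (f x))"
proof -
  have "\<phi> 0 = 0" using assms unfolding alg_hom_def by (metis add_cancel_right_right add_0)
  with assms show ?thesis
    by (induction A rule: infinite_finite_induct) (simp_all add: alg_hom_def)
qed

abbreviation letter :: "gen \<Rightarrow> 'k::field falg" where
  "letter i \<equiv> Poly_Mapping.single (Word [i]) 1"

definition linear_part_in_span :: "'k::field falg \<Rightarrow> 'k falg \<Rightarrow> 'k falg \<Rightarrow> bool" where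
  "linear_part_in_span a b h \<longleftrightarrow> (\<exists>c d. \<forall>i.
     Poly_Mapping.lookup h (Word [i]) = c * Poly_Mapping.lookup a (Word [i]) + d * Poly_Mapping.lookup b (Word [i]))"

lemma linear_part_in_span_left: "linear_part_in_span a b a"
  unfolding linear_part_in_span_def by (rule exI[of _ 1], rule exI[of _ 0]) simp

lemma linear_part_in_span_right: "linear_part_in_span a b b"
  unfolding linear_part_in_span_def by (rule exI[of _ 0], rule exI[of _ 1]) simp

lemma linear_part_in_span_zero: "linear_part_in_span a b 0"
  unfolding linear_part_in_span_def by (rule exI[of _ 0], rule exI[of _ 0]) simp

lemma linear_part_in_span_one: "linear_part_in_span a b 1"
  unfolding linear_part_in_span_def by (rule exI[of _ 0], rule exI[of _ 0]) (simp add: lookup_one zero_word_def)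

lemma linear_part_in_span_add:
  assumes "linear_part_in_span a b h" "linear_part_in_span a b k"
  shows "linear_part_in_span a b (h + k)"
proof -
  from assms obtain c d c' d' where
    "\<And>i. Poly_Mapping.lookup h (Word [i]) = c * Poly_Mapping.lookup a (Word [i]) + d * Poly_Mapping.lookup b (Word [i])"
    "\<And>i. Poly_Mapping.lookup k (Word [i]) = c' * Poly_Mapping.lookup a (Word [i]) + d' * Poly_Mapping.lookup b (Word [i])"
    unfolding linear_part_in_span_def by blast
  then show ?thesis
    unfolding linear_part_in_span_def
    by (intro exI[of _ "c + c'"] exI[of _ "d + d'"]) (simp add: lookup_add algebra_simps)
qed

lemma linear_part_in_span_smult:
  assumes "linear_part_in_span a b h"
  shows "linear_part_in_span a b (smult e h)"
proof -
  from assms obtain c d where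
    "\<And>i. Poly_Mapping.lookup h (Word [i]) = c * Poly_Mapping.lookup a (Word [i]) + d * Poly_Mapping.lookup b (Word [i])"
    unfolding linear_part_in_span_def by blast
  then show ?thesis
    unfolding linear_part_in_span_def
    by (intro exI[of _ "e * c"] exI[of _ "e * d"]) (simp add: algebra_simps)
qed

lemma linear_part_in_span_sum:
  "(\<And>x. x \<in> A \<Longrightarrow> linear_part_in_span a b (f x)) \<Longrightarrow> linear_part_in_span a b (\<Sum>x\<in>A. f x)"
  by (induction A rule: infinite_finite_induct)
     (auto intro: linear_part_in_span_add linear_part_in_span_zero)

lemma linear_part_in_span_mult:
  assumes "linear_part_in_span a b h" "linear_part_in_span a b k"
  shows "linear_part_in_span a b (h * k)"
proof -
  from assms obtain c d c' d' where
    "\<And>i. Poly_Mapping.lookup h (Word [i]) = c * Poly_Mapping.lookup a (Word [i]) + d * Poly_Mapping.lookup b (Word [i])"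
    "\<And>i. Poly_Mapping.lookup k (Word [i]) = c' * Poly_Mapping.lookup a (Word [i]) + d' * Poly_Mapping.lookup b (Word [i])"
    unfolding linear_part_in_span_def by blast
  then show ?thesis
    unfolding linear_part_in_span_def
    by (intro exI[of _ "Poly_Mapping.lookup h 0 * c' + c * Poly_Mapping.lookup k 0"]
        exI[of _ "Poly_Mapping.lookup h 0 * d' + d * Poly_Mapping.lookup k 0"])
       (simp add: lookup_mult_letter algebra_simps)
qed

lemma linear_part_in_span_alg_hom_image:
  fixes \<phi> :: "'k::field falg \<Rightarrow> 'k falg"
  assumes "alg_hom \<phi>"
  shows "linear_part_in_span (\<phi> (letter X1)) (\<phi> (letter X2)) (\<phi> f)"
proof -
  let ?S = "linear_part_in_span (\<phi> (letter X1)) (\<phi> (letter X2))"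
  have word: "?S (\<phi> (Poly_Mapping.single (Word w) 1))" for w
  proof (induction w)
    case Nil
    then show ?case
      using assms by (simp add: alg_hom_def zero_word_def[symmetric] linear_part_in_span_one)
  next
    case (Cons i w)
    have "Poly_Mapping.single (Word (i # w)) 1 = letter i * Poly_Mapping.single (Word w) (1::'k)"
      by (simp add: mult_single plus_word_def)
    then have "\<phi> (Poly_Mapping.single (Word (i # w)) 1) = \<phi> (letter i) * \<phi> (Poly_Mapping.single (Word w) 1)"
      using assms by (simp add: alg_hom_def)
    moreover have "?S (\<phi> (letter i))"
      by (cases i) (simp_all add: linear_part_in_span_left linear_part_in_span_right)
    ultimately show ?case using Cons.IH by (simp add: linear_part_in_span_mult)
  qed
  have "f = (\<Sum>w\<in>Poly_Mapping.keys f. smult (Poly_Mapping.lookup f w) (Poly_Mapping.single w 1))"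
    by (rule poly_mapping_eqI)
       (simp add: smult_single_one lookup_sum lookup_single sum_keys_when_eq when_def in_keys_iff)
  then have "\<phi> f = \<phi> (\<Sum>w\<in>Poly_Mapping.keys f. smult (Poly_Mapping.lookup f w) (Poly_Mapping.single w 1))"
    by (rule arg_cong)
  also have "\<dots> = (\<Sum>w\<in>Poly_Mapping.keys f. smult (Poly_Mapping.lookup f w) (\<phi> (Poly_Mapping.single w 1)))"
    using assms by (simp add: alg_hom_sum) (simp add: alg_hom_def)
  also have "?S \<dots>"
    by (intro linear_part_in_span_sum linear_part_in_span_smult) (metis word word.exhaust)
  finally show ?thesis .
qed

text \<open>Surjectivity puts \<open>x\<^sub>1\<close> and \<open>x\<^sub>2\<close> in the image, so the linear parts of \<open>\<phi>(x\<^sub>1)\<close> and \<open>\<phi>(x\<^sub>2)\<close>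
  span the whole two-dimensional space.\<close>
lemma surj_alg_hom_det_nonzero:
  fixes \<phi> :: "'k::field falg \<Rightarrow> 'k falg"
  assumes "alg_hom \<phi>" "surj \<phi>"
  defines "a i j \<equiv> Poly_Mapping.lookup (\<phi> (letter i)) (Word [j])"
  shows "a X1 X1 * a X2 X2 \<noteq> a X1 X2 * a X2 X1"
proof
  assume det: "a X1 X1 * a X2 X2 = a X1 X2 * a X2 X1"
  obtain f1 f2 where "\<phi> f1 = letter X1" "\<phi> f2 = letter X2"
    using \<open>surj \<phi>\<close> by (metis surjD)
  with linear_part_in_span_alg_hom_image[OF \<open>alg_hom \<phi>\<close>] obtain c1 d1 c2 d2 where
    "\<And>j. Poly_Mapping.lookup (letter X1 :: 'k falg) (Word [j]) = c1 * a X1 j + d1 * a X2 j"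
    "\<And>j. Poly_Mapping.lookup (letter X2 :: 'k falg) (Word [j]) = c2 * a X1 j + d2 * a X2 j"
    unfolding linear_part_in_span_def a_def by metis
  then have "c1 * a X1 X1 + d1 * a X2 X1 = 1" "c1 * a X1 X2 + d1 * a X2 X2 = 0"
    "c2 * a X1 X1 + d2 * a X2 X1 = 0" "c2 * a X1 X2 + d2 * a X2 X2 = 1"
    by (metis lookup_single_eq lookup_single_not_eq word.inject list.inject gen.distinct)+
  moreover have "(c1 * d2 - d1 * c2) * (a X1 X1 * a X2 X2 - a X1 X2 * a X2 X1) =
      (c1 * a X1 X1 + d1 * a X2 X1) * (c2 * a X1 X2 + d2 * a X2 X2)
      - (c1 * a X1 X2 + d1 * a X2 X2) * (c2 * a X1 X1 + d2 * a X2 X1)"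
    by (simp add: algebra_simps)
  ultimately show False using det by simp
qed

text \<open>Compare the coefficients of \<open>v \<otimes> u\<close> in the braiding condition applied to \<open>x\<^sub>i \<otimes> x\<^sub>j\<close>.\<close>
lemma braided_iso_bcoef:
  fixes q p :: "gen \<Rightarrow> gen \<Rightarrow> 'k::field"
  assumes "braided_iso q p \<phi>"
    and "Poly_Mapping.lookup (\<phi> (letter i)) u \<noteq> 0" "Poly_Mapping.lookup (\<phi> (letter j)) v \<noteq> 0"
  shows "bcoef p u v = q i j"
proof -
  have "tensmap \<phi> (braid q (tens (letter i) (letter j))) = braid p (tensmap \<phi> (tens (letter i) (letter j)))"
    using assms(1) unfolding braided_iso_def by blast
  then have "Poly_Mapping.lookup (tensmap \<phi> (braid q (tens (letter i) (letter j)))) (v, u)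
      = Poly_Mapping.lookup (braid p (tensmap \<phi> (tens (letter i) (letter j)))) (v, u)"
    by simp
  then have "q i j * (Poly_Mapping.lookup (\<phi> (letter j)) v * Poly_Mapping.lookup (\<phi> (letter i)) u)
      = Poly_Mapping.lookup (\<phi> (letter i)) u * Poly_Mapping.lookup (\<phi> (letter j)) v * bcoef p u v"
    by (simp add: tens_single_single braid_single lookup_tensmap_single)
  with assms(2,3) show ?thesis by (simp add: mult_ac)
qed

lemma braided_iso_imp_eq_or_dual:
  fixes q p :: "gen \<Rightarrow> gen \<Rightarrow> 'k::field"
  assumes "braided_iso q p \<phi>"
  shows "p = q \<or> p = dual_braiding q"
proof -
  define a where "a i j = Poly_Mapping.lookup (\<phi> (letter i)) (Word [j])" for i j
  have "alg_hom \<phi>" "surj \<phi>"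
    using assms by (simp_all add: braided_iso_def alg_iso_iff_bij_alg_hom bij_is_surj)
  then have "a X1 X1 * a X2 X2 \<noteq> a X1 X2 * a X2 X1"
    unfolding a_def by (rule surj_alg_hom_det_nonzero)
  then consider "a X1 X1 \<noteq> 0" "a X2 X2 \<noteq> 0" | "a X1 X2 \<noteq> 0" "a X2 X1 \<noteq> 0"
    by fastforce
  then show ?thesis
  proof cases
    case 1
    then have "a i i \<noteq> 0" for i by (cases i) simp_all
    then have "p i j = q i j" for i j
      using braided_iso_bcoef[OF assms] unfolding a_def by (metis bcoef_letters)
    then show ?thesis by (simp add: fun_eq_iff)
  next
    case 2
    then have "a i (swap_gen i) \<noteq> 0" for i by (cases i) simp_all
    then have "p (swap_gen i) (swap_gen j) = q i j" for i j
      using braided_iso_bcoef[OF assms] unfolding a_def by (metis bcoef_letters)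
    then have "p i j = dual_braiding q i j" for i j
      unfolding dual_braiding_def by (metis swap_gen_swap_gen)
    then show ?thesis by (simp add: fun_eq_iff)
  qed
qed

theorem proposition1:
  fixes q p :: "gen \<Rightarrow> gen \<Rightarrow> 'k::field"
  shows "braided_isomorphic q p \<longleftrightarrow> (p = q \<or> p = dual_braiding q)"
  using braided_iso_imp_eq_or_dual braided_isomorphic_refl braided_isomorphic_dual
  unfolding braided_isomorphic_def by blast

end
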